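(* Let $b\ge 1$, let $L$ be a normalized Latin square of size $b$ over the alphabet $\mathcal A=\{a_1,\dots,a_b\}$, and let $M=\mathcal{E}(L)$ be its encoding matrix. Let $w$ be a word of length $m\ge 1$ over $\mathcal A$ and let $r\ge -1$ be an integer. (1) If $w$ is $r$-regular, then $L(w)$ is $(r+1)$-regular. (2) If $M$ is invertible (as a real matrix) and $L(w)$ is $(r+1)$-regular, then $w$ is $r$-regular. (3) If $M$ is not invertible, then there exist a positive integer $m'$ and a word $w'$ of length $m'$ over $\mathcal A$ such that $L(w')$ is $1$-regular but $w'$ is not $0$-regular.
   Context: Fix an alphabet $\mathcal A=\{a_1,\dots,a_b\}$ of $b$ letters, ordered $a_1<\dots<a_b$; identify $a_q$ with the integer $q$ when convenient. For a word $w=w_1\cdots w_m$ over $\mathcal A$ and an integer $r\ge -1$, $w$ is $r$-regular if for every $k=0,1,\dots,r$ the sum $\sum_{1\le t\le m,\ w_t=x} t^k$ is the same for all letters $x\in\mathcal A$ (a letter not occurring in $w$ contributes the empty sum $0$); every word is $(-1)$-regular. A Latin square of size $b$ over $\mathcal A$ is a $b\times b$ matrix with entries in $\mathcal A$ in which each letter occurs exactly once in each row and each column; it is normalized if its first column is $(a_1,\dots,a_b)^T$, i.e. $L_{q,1}=a_q$. For $k=1,\dots,b$ let $\pi_k$ be the permutation of $\mathcal A$ given by $\pi_k(a_q)=L_{q,k}$ (so $\pi_1=\mathrm{id}$ when $L$ is normalized). For a permutation $\pi$ of $\mathcal A$, $\pi(w_1\cdots w_m)=\pi(w_1)\cdots\pi(w_m)$,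 and $L(w)$ is the concatenation $w\,\pi_2(w)\,\pi_3(w)\cdots\pi_b(w)$, a word of length $bm$. The encoding matrix $M=\mathcal E(L)$ is the $b\times b$ integer matrix defined by $M_{ij}=x$ if and only if $L_{j,x}=a_i$, i.e. $M_{ij}$ is the index of the column in which the letter $a_i$ occurs in row $j$ of $L$. *)

theory Defs
  imports Main "Jordan_Normal_Form.Matrix"
begin

(* Alphabet a_1 < ... < a_b is identified with the naturals 1..b.
   A word is a list over {1..b}; position t (1-based) is w ! (t-1). *)

definition word_over :: "nat \<Rightarrow> nat list \<Rightarrow> bool" where
  "word_over b w \<longleftrightarrow> set w \<subseteq> {1..b}"

definition pos_power_sum :: "nat list \<Rightarrow> nat \<Rightarrow> nat \<Rightarrow> nat" where
  "pos_power_sum w x k = (\<Sum>t\<in>{1..length w}. if w ! (t - 1) = x then t ^ k else 0)"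

definition regular :: "nat \<Rightarrow> int \<Rightarrow> nat list \<Rightarrow> bool" where
  "regular b r w \<longleftrightarrow>
     (\<forall>k::nat. int k \<le> r \<longrightarrow>
        (\<forall>x\<in>{1..b}. \<forall>y\<in>{1..b}. pos_power_sum w x k = pos_power_sum w y k))"

(* Latin square L q k = entry in row q, column k, indices 1..b *)
definition latin_square :: "nat \<Rightarrow> (nat \<Rightarrow> nat \<Rightarrow> nat) \<Rightarrow> bool" where
  "latin_square b L \<longleftrightarrow>
     (\<forall>q\<in>{1..b}. bij_betw (\<lambda>k. L q k) {1..b} {1..b}) \<and>
     (\<forall>k\<in>{1..b}. bij_betw (\<lambda>q. L q k) {1..b} {1..b})"

definition normalized :: "nat \<Rightarrow> (nat \<Rightarrow> nat \<Rightarrow> nat) \<Rightarrow> bool" where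
  "normalized b L \<longleftrightarrow> (\<forall>q\<in>{1..b}. L q 1 = q)"

(* pi_k(a_q) = L_{q,k};  L(w) = w pi_2(w) ... pi_b(w) (pi_1 = id for normalized L) *)
definition latin_apply :: "nat \<Rightarrow> (nat \<Rightarrow> nat \<Rightarrow> nat) \<Rightarrow> nat list \<Rightarrow> nat list" where
  "latin_apply b L w = concat (map (\<lambda>k. map (\<lambda>x. L x k) w) [1..<b+1])"

definition enc :: "nat \<Rightarrow> (nat \<Rightarrow> nat \<Rightarrow> nat) \<Rightarrow> nat \<Rightarrow> nat \<Rightarrow> nat" where
  "enc b L i j = (THE x. x \<in> {1..b} \<and> L j x = i)"

(* encoding matrix as a real b x b matrix (0-based indices of mat) *)
definition enc_mat :: "nat \<Rightarrow> (nat \<Rightarrow> nat \<Rightarrow> nat) \<Rightarrow> real mat" where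
  "enc_mat b L = mat b b (\<lambda>(i, j). real (enc b L (i + 1) (j + 1)))"

end

theory Submission
  imports Defs "Jordan_Normal_Form.Determinant"
begin

(* Let p_q(i) be the i-th power sum of the positions of the letter q in w and m = |w|.
   The copy of position t of w in the k-th block of L(w) sits at position (k-1)m + t and is
   the letter x exactly when k = M_{x,q}, q = w_t.  Expanding binomially, the (j+1)-st power
   sum of x in L(w) is a combination of the sums \<Sum>_q (M_{x,q} - 1)^e p_q(i), i \<le> j + 1.
   Every row of M is a permutation of 1..b, so such a sum does not depend on x once p(i) is
   constant, and for e = 0 it never does.  Hence, if w is (j-1)-regular, the (j+1)-st power
   sums of L(w) are balanced iff the vector M p(j) is constant.  Since M has constant row
   sums, this gives (1) at once and (2) by induction on j (an invertible M maps only constant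
   vectors to constant vectors); for (3) an integer kernel vector of a singular M is
   non-constant and, shifted to be non-negative, prescribes the letter counts of w'. *)

definition balanced :: "nat \<Rightarrow> nat list \<Rightarrow> nat \<Rightarrow> bool" where
  "balanced b w k \<longleftrightarrow> (\<forall>x\<in>{1..b}. \<forall>y\<in>{1..b}. pos_power_sum w x k = pos_power_sum w y k)"

lemma regular_iff_balanced: "regular b r w \<longleftrightarrow> (\<forall>k. int k \<le> r \<longrightarrow> balanced b w k)"
  unfolding regular_def balanced_def ..

lemma latin_square_enc:
  assumes "latin_square b L" "q \<in> {1..b}" "x \<in> {1..b}"
  shows "enc b L x q \<in> {1..b}" "L q (enc b L x q) = x"
proof -
  have bij: "bij_betw (L q) {1..b} {1..b}"
    using assms(1,2) unfolding latin_square_def by blast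
  then obtain k where k: "k \<in> {1..b}" "L q k = x"
    using assms(3) bij_betw_imp_surj_on by (metis imageE)
  have "\<exists>!k. k \<in> {1..b} \<and> L q k = x"
    using k inj_onD[OF bij_betw_imp_inj_on[OF bij]] by (intro ex1I[of _ k]) auto
  from theI'[OF this] show "enc b L x q \<in> {1..b}" "L q (enc b L x q) = x"
    unfolding enc_def by auto
qed

lemma latin_eq_iff_enc:
  assumes "latin_square b L" "q \<in> {1..b}" "x \<in> {1..b}" "k \<in> {1..b}"
  shows "L q k = x \<longleftrightarrow> k = enc b L x q"
proof -
  have "inj_on (L q) {1..b}"
    using assms(1,2) unfolding latin_square_def bij_betw_def by blast
  then show ?thesis
    using latin_square_enc[OF assms(1-3)] assms(4) by (metis inj_onD)
qed

lemma bij_betw_enc: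
  assumes "latin_square b L" "x \<in> {1..b}"
  shows "bij_betw (enc b L x) {1..b} {1..b}"
proof -
  have "inj_on (enc b L x) {1..b}"
  proof (rule inj_onI)
    fix q q' assume q: "q \<in> {1..b}" "q' \<in> {1..b}" and eq: "enc b L x q = enc b L x q'"
    let ?k = "enc b L x q"
    have "L q ?k = L q' ?k"
      using latin_square_enc(2)[OF assms(1) q(1) assms(2)] latin_square_enc(2)[OF assms(1) q(2) assms(2)]
        eq by simp
    moreover have "inj_on (\<lambda>q. L q ?k) {1..b}"
      using assms(1) latin_square_enc(1)[OF assms(1) q(1) assms(2)]
      unfolding latin_square_def bij_betw_def by blast
    ultimately show "q = q'" using q by (metis inj_onD)
  qed
  moreover have "enc b L x ` {1..b} \<subseteq> {1..b}"
    using latin_square_enc(1)[OF assms(1) _ assms(2)] by auto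
  ultimately show ?thesis
    unfolding bij_betw_def using endo_inj_surj by blast
qed

lemma sum_enc_row:
  assumes "latin_square b L" "x \<in> {1..b}"
  shows "(\<Sum>q\<in>{1..b}. f (enc b L x q)) = (\<Sum>k\<in>{1..b}. f k)"
  using sum.reindex_bij_betw[OF bij_betw_enc[OF assms]] .

lemma pos_power_sum_lessThan:
  "pos_power_sum w x k = (\<Sum>t<length w. if w ! t = x then (t + 1) ^ k else 0)"
  unfolding pos_power_sum_def by (auto simp: sum.atLeast1_atMost_eq intro!: sum.cong)

lemma pos_power_sum_0_eq_count_list: "pos_power_sum w x 0 = count_list w x"
  unfolding pos_power_sum_lessThan count_list_eq_length_filter length_filter_conv_card
  by (auto simp: sum.If_cases intro!: arg_cong[where f = card])

lemma word_over_nth: "word_over b w \<Longrightarrow> t < length w \<Longrightarrow> w ! t \<in> {1..b}"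
  unfolding word_over_def using nth_mem by blast

lemma sum_positions_by_letter:
  assumes "word_over b w"
  shows "(\<Sum>t<length w. g (w ! t) t) = (\<Sum>q\<in>{1..b}. \<Sum>t<length w. if w ! t = q then g q t else 0)"
proof -
  have "(\<Sum>t<length w. g (w ! t) t) = (\<Sum>t<length w. \<Sum>q\<in>{1..b}. if w ! t = q then g q t else 0)"
    using word_over_nth[OF assms] by (intro sum.cong) (auto simp: if_distrib)
  also have "\<dots> = (\<Sum>q\<in>{1..b}. \<Sum>t<length w. if w ! t = q then g q t else 0)"
    by (rule sum.swap)
  finally show ?thesis .
qed

lemma sum_lessThan_add:
  "(\<Sum>s<a + (c::nat). g s) = (\<Sum>s<a. g s) + (\<Sum>t<c. g (a + t) :: 'b::comm_monoid_add)"
  by (induction c) (simp_all add: ac_simps)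

lemma sum_concat_blocks:
  assumes "\<forall>u\<in>set us. length u = m"
  shows "(\<Sum>s<length (concat us). f s (concat us ! s))
       = (\<Sum>k<length us. \<Sum>t<m. f (k * m + t) (us ! k ! t))"
  using assms
proof (induction us rule: rev_induct)
  case Nil then show ?case by simp
next
  case (snoc u us)
  let ?c = "concat us"
  have len: "length ?c = length us * m" "length u = m"
    using snoc.prems by (simp_all add: length_concat sum_list_triv cong: map_cong)
  have "(\<Sum>s<length (concat (us @ [u])). f s (concat (us @ [u]) ! s))
      = (\<Sum>s<length ?c + length u. f s ((?c @ u) ! s))"
    by simp
  also have "\<dots> = (\<Sum>s<length ?c. f s (?c ! s)) + (\<Sum>t<m. f (length us * m + t) (u ! t))"
    unfolding sum_lessThan_add len(2) by (simp add: nth_append len(1))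
  also have "\<dots> = (\<Sum>k<length (us @ [u]). \<Sum>t<m. f (k * m + t) ((us @ [u]) ! k ! t))"
    using snoc by (simp add: nth_append)
  finally show ?case .
qed

lemma pos_power_sum_latin_apply_blocks:
  "pos_power_sum (latin_apply b L w) x j
     = (\<Sum>k\<in>{1..b}. \<Sum>t<length w. if L (w ! t) k = x then ((k - 1) * length w + t + 1) ^ j else 0)"
proof -
  let ?us = "map (\<lambda>k. map (\<lambda>y. L y k) w) [1..<b+1]"
  have "pos_power_sum (latin_apply b L w) x j
      = (\<Sum>s<length (concat ?us). if concat ?us ! s = x then (s + 1) ^ j else 0)"
    unfolding pos_power_sum_lessThan latin_apply_def ..
  also have "\<dots> = (\<Sum>k<b. \<Sum>t<length w. if L (w ! t) (k + 1) = x then (k * length w + t + 1) ^ j else 0)"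
    by (subst sum_concat_blocks[where m = "length w"]) (auto simp del: upt_Suc)
  finally show ?thesis
    by (simp add: sum.atLeast1_atMost_eq cong: if_cong)
qed

lemma pos_power_sum_latin_apply_letters:
  assumes ls: "latin_square b L" and wo: "word_over b w" and x: "x \<in> {1..b}"
  shows "pos_power_sum (latin_apply b L w) x j
     = (\<Sum>q\<in>{1..b}. \<Sum>t<length w. if w ! t = q then ((enc b L x q - 1) * length w + t + 1) ^ j else 0)"
proof -
  let ?g = "\<lambda>k t. ((k - 1) * length w + t + 1) ^ j"
  have "pos_power_sum (latin_apply b L w) x j
      = (\<Sum>t<length w. \<Sum>k\<in>{1..b}. if L (w ! t) k = x then ?g k t else 0)"
    unfolding pos_power_sum_latin_apply_blocks by (rule sum.swap)
  also have "\<dots> = (\<Sum>t<length w. ?g (enc b L x (w ! t)) t)"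
  proof (rule sum.cong[OF refl])
    fix t assume "t \<in> {..<length w}"
    then have wt: "w ! t \<in> {1..b}"
      using word_over_nth[OF wo] by simp
    show "(\<Sum>k\<in>{1..b}. if L (w ! t) k = x then ?g k t else 0) = ?g (enc b L x (w ! t)) t"
      using latin_eq_iff_enc[OF ls wt x] latin_square_enc(1)[OF ls wt x] by (simp cong: if_cong)
  qed
  also have "\<dots> = (\<Sum>q\<in>{1..b}. \<Sum>t<length w. if w ! t = q then ?g (enc b L x q) t else 0)"
    by (rule sum_positions_by_letter[OF wo])
  finally show ?thesis .
qed

lemma pos_power_sum_latin_apply:
  assumes "latin_square b L" and "word_over b w" and "x \<in> {1..b}"
  shows "pos_power_sum (latin_apply b L w) x j
     = (\<Sum>i\<le>j. (j choose i) * length w ^ (j - i)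
                  * (\<Sum>q\<in>{1..b}. (enc b L x q - 1) ^ (j - i) * pos_power_sum w q i))"
proof -
  let ?m = "length w"
  define c where "c q i = (j choose i) * ?m ^ (j - i) * (enc b L x q - 1) ^ (j - i)" for q i
  have expand: "(if w ! t = q then ((enc b L x q - 1) * ?m + t + 1) ^ j else 0)
      = (\<Sum>i\<le>j. c q i * (if w ! t = q then (t + 1) ^ i else 0))" for q t
  proof -
    have "((enc b L x q - 1) * ?m + t + 1) ^ j = ((t + 1) + (enc b L x q - 1) * ?m) ^ j"
      by (simp add: ac_simps)
    also have "\<dots> = (\<Sum>i\<le>j. c q i * (t + 1) ^ i)"
      unfolding binomial_ring c_def by (simp add: power_mult_distrib ac_simps)
    finally show ?thesis by simp
  qed
  have "pos_power_sum (latin_apply b L w) x j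
      = (\<Sum>q\<in>{1..b}. \<Sum>t<?m. \<Sum>i\<le>j. c q i * (if w ! t = q then (t + 1) ^ i else 0))"
    unfolding pos_power_sum_latin_apply_letters[OF assms] expand ..
  also have "\<dots> = (\<Sum>q\<in>{1..b}. \<Sum>i\<le>j. c q i * pos_power_sum w q i)"
    unfolding pos_power_sum_lessThan sum_distrib_left by (simp add: sum.swap[of _ "{..j}"])
  also have "\<dots> = (\<Sum>i\<le>j. \<Sum>q\<in>{1..b}. c q i * pos_power_sum w q i)"
    by (rule sum.swap)
  finally show ?thesis
    by (simp add: c_def sum_distrib_left ac_simps)
qed

lemma balanced_latin_apply_0:
  assumes "latin_square b L" and "word_over b w"
  shows "balanced b (latin_apply b L w) 0"
  unfolding balanced_def using pos_power_sum_latin_apply[OF assms] by simp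

lemma sum_enc_weighted_balanced:
  assumes ls: "latin_square b L" and bal: "balanced b w i" and x: "x \<in> {1..b}" and y: "y \<in> {1..b}"
  shows "(\<Sum>q\<in>{1..b}. f (enc b L x q) * pos_power_sum w q i)
       = (\<Sum>q\<in>{1..b}. f (enc b L y q) * pos_power_sum w q i)"
proof -
  have const: "pos_power_sum w q i = pos_power_sum w x i" if "q \<in> {1..b}" for q
    using bal x that unfolding balanced_def by blast
  have "(\<Sum>q\<in>{1..b}. f (enc b L z q) * pos_power_sum w q i)
      = (\<Sum>k\<in>{1..b}. f k * pos_power_sum w x i)" if z: "z \<in> {1..b}" for z
    using const sum_enc_row[OF ls z, of "\<lambda>k. f k * pos_power_sum w x i"] by simp
  from this[OF x] this[OF y] show ?thesis by simp
qed

lemma sum_enc_mult_split: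
  assumes ls: "latin_square b L" and z: "z \<in> {1..b}"
  shows "(\<Sum>q\<in>{1..b}. enc b L z q * p q) = (\<Sum>q\<in>{1..b}. (enc b L z q - 1) * p q) + (\<Sum>q\<in>{1..b}. p q)"
proof -
  have "enc b L z q * p q = (enc b L z q - 1) * p q + p q" if "q \<in> {1..b}" for q
    using latin_square_enc(1)[OF ls that z] by (cases "enc b L z q") auto
  then show ?thesis
    unfolding sum.distrib[symmetric] by (intro sum.cong) auto
qed

lemma pos_power_sum_latin_apply_Suc_eq_iff:
  assumes ls: "latin_square b L" and wo: "word_over b w"
    and lower: "\<forall>i<j. balanced b w i" and x: "x \<in> {1..b}" and y: "y \<in> {1..b}"
  shows "pos_power_sum (latin_apply b L w) x (Suc j) = pos_power_sum (latin_apply b L w) y (Suc j)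
     \<longleftrightarrow> (\<Sum>q\<in>{1..b}. enc b L x q * pos_power_sum w q j)
       = (\<Sum>q\<in>{1..b}. enc b L y q * pos_power_sum w q j)"
proof (cases "w = []")
  case True
  then show ?thesis by (simp add: pos_power_sum_def latin_apply_def)
next
  case False
  let ?m = "length w"
  define S where "S z e i = (\<Sum>q\<in>{1..b}. (enc b L z q - 1) ^ e * pos_power_sum w q i)" for z e i
  define F where "F z i = (Suc j choose i) * ?m ^ (Suc j - i) * S z (Suc j - i) i" for z i
  have split: "pos_power_sum (latin_apply b L w) z (Suc j)
      = (\<Sum>i<j. F z i) + Suc j * ?m * S z 1 j + S z 0 (Suc j)" if "z \<in> {1..b}" for z
  proof -
    have "pos_power_sum (latin_apply b L w) z (Suc j) = (\<Sum>i<Suc (Suc j). F z i)"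
      unfolding pos_power_sum_latin_apply[OF ls wo that] F_def S_def lessThan_Suc_atMost ..
    then show ?thesis
      by (simp add: F_def)
  qed
  have lower_eq: "(\<Sum>i<j. F x i) = (\<Sum>i<j. F y i)"
  proof (rule sum.cong[OF refl])
    fix i assume "i \<in> {..<j}"
    then have "balanced b w i"
      using lower by simp
    from sum_enc_weighted_balanced[OF ls this x y, of "\<lambda>k. (k - 1) ^ (Suc j - i)"]
    show "F x i = F y i"
      unfolding F_def S_def by simp
  qed
  have top_eq: "S x 0 (Suc j) = S y 0 (Suc j)"
    by (simp add: S_def)
  have "?m > 0"
    using False by simp
  then have "pos_power_sum (latin_apply b L w) x (Suc j) = pos_power_sum (latin_apply b L w) y (Suc j)
      \<longleftrightarrow> S x 1 j = S y 1 j"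
    unfolding split[OF x] split[OF y] lower_eq top_eq by simp
  also have "\<dots> \<longleftrightarrow> (\<Sum>q\<in>{1..b}. enc b L x q * pos_power_sum w q j)
       = (\<Sum>q\<in>{1..b}. enc b L y q * pos_power_sum w q j)"
    unfolding sum_enc_mult_split[OF ls x] sum_enc_mult_split[OF ls y] S_def by simp
  finally show ?thesis .
qed

definition constant_vec :: "'a vec \<Rightarrow> bool" where
  "constant_vec v \<longleftrightarrow> (\<forall>i<dim_vec v. \<forall>j<dim_vec v. v $ i = v $ j)"

lemma constant_vec_iff_smult_one:
  assumes v: "(v :: 'a::comm_ring_1 vec) \<in> carrier_vec n"
  shows "constant_vec v \<longleftrightarrow> (\<exists>c. v = c \<cdot>\<^sub>v vec n (\<lambda>_. 1))"
proof
  assume const: "constant_vec v"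
  have "v = (if n = 0 then 0 else v $ 0) \<cdot>\<^sub>v vec n (\<lambda>_. 1)"
  proof (rule eq_vecI)
    fix i assume "i < dim_vec ((if n = 0 then 0 else v $ 0) \<cdot>\<^sub>v vec n (\<lambda>_. 1 :: 'a))"
    then have "i < n" "0 < n" by auto
    moreover have "\<forall>i<n. \<forall>j<n. v $ i = v $ j"
      using const unfolding constant_vec_def carrier_vecD[OF v] .
    ultimately have "v $ i = v $ 0"
      by blast
    with \<open>i < n\<close> show "v $ i = ((if n = 0 then 0 else v $ 0) \<cdot>\<^sub>v vec n (\<lambda>_. 1)) $ i"
      by simp
  qed (use v in simp)
  then show "\<exists>c. v = c \<cdot>\<^sub>v vec n (\<lambda>_. 1)" ..
next
  assume "\<exists>c. v = c \<cdot>\<^sub>v vec n (\<lambda>_. 1)"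
  then obtain c where "v = c \<cdot>\<^sub>v vec n (\<lambda>_. 1)" ..
  then show "constant_vec v"
    unfolding constant_vec_def by simp
qed

lemma constant_vec_shift_iff:
  "constant_vec (vec b (\<lambda>i. f (i + 1))) \<longleftrightarrow> (\<forall>x\<in>{1..b}. \<forall>y\<in>{1..b}. f x = f y)"
proof
  assume const: "constant_vec (vec b (\<lambda>i. f (i + 1)))"
  show "\<forall>x\<in>{1..b}. \<forall>y\<in>{1..b}. f x = f y"
  proof (intro ballI)
    fix x y assume "x \<in> {1..b}" "y \<in> {1..b}"
    then obtain i j where ij: "x = Suc i" "y = Suc j" "i < b" "j < b"
      by (cases x; cases y) auto
    moreover from const have "\<forall>i<b. \<forall>j<b. vec b (\<lambda>i. f (i + 1)) $ i = vec b (\<lambda>i. f (i + 1)) $ j"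
      unfolding constant_vec_def by (simp only: dim_vec)
    ultimately have "vec b (\<lambda>i. f (i + 1)) $ i = vec b (\<lambda>i. f (i + 1)) $ j"
      by blast
    with ij show "f x = f y"
      by simp
  qed
next
  assume eq: "\<forall>x\<in>{1..b}. \<forall>y\<in>{1..b}. f x = f y"
  show "constant_vec (vec b (\<lambda>i. f (i + 1)))"
    unfolding constant_vec_def
  proof (intro allI impI)
    fix i j assume "i < dim_vec (vec b (\<lambda>i. f (i + 1)))" "j < dim_vec (vec b (\<lambda>i. f (i + 1)))"
    then have "i < b" "j < b" "i + 1 \<in> {1..b}" "j + 1 \<in> {1..b}"
      by auto
    moreover from eq this(3,4) have "f (i + 1) = f (j + 1)"
      by blast
    ultimately show "vec b (\<lambda>i. f (i + 1)) $ i = vec b (\<lambda>i. f (i + 1)) $ j"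
      by simp
  qed
qed

lemma mult_mat_vec_smult:
  fixes A :: "'a::comm_ring mat"
  assumes "A \<in> carrier_mat nr n" and "v \<in> carrier_vec n"
  shows "A *\<^sub>v (a \<cdot>\<^sub>v v) = a \<cdot>\<^sub>v (A *\<^sub>v v)"
  using assms by (intro eq_vecI) auto

lemma mult_mat_vec_smult_one:
  fixes A :: "'a::comm_ring_1 mat"
  assumes "A \<in> carrier_mat n n" and rows: "A *\<^sub>v vec n (\<lambda>_. 1) = s \<cdot>\<^sub>v vec n (\<lambda>_. 1)"
  shows "A *\<^sub>v (c \<cdot>\<^sub>v vec n (\<lambda>_. 1)) = (c * s) \<cdot>\<^sub>v vec n (\<lambda>_. 1)"
  by (simp add: mult_mat_vec_smult[OF assms(1)] rows smult_smult_assoc)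

lemma constant_vec_mult_mat_vec:
  fixes A :: "'a::comm_ring_1 mat"
  assumes A: "A \<in> carrier_mat n n" and rows: "A *\<^sub>v vec n (\<lambda>_. 1) = s \<cdot>\<^sub>v vec n (\<lambda>_. 1)"
    and v: "v \<in> carrier_vec n" and const: "constant_vec v"
  shows "constant_vec (A *\<^sub>v v)"
proof -
  obtain c where "v = c \<cdot>\<^sub>v vec n (\<lambda>_. 1)"
    using const constant_vec_iff_smult_one[OF v] by blast
  then have "A *\<^sub>v v = (c * s) \<cdot>\<^sub>v vec n (\<lambda>_. 1)"
    using mult_mat_vec_smult_one[OF A rows] by simp
  then show ?thesis
    using A constant_vec_iff_smult_one[of "A *\<^sub>v v" n] by auto
qed

lemma mult_mat_vec_eq_0_iff:
  fixes A :: "'a::idom mat"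
  assumes "A \<in> carrier_mat n n" and "det A \<noteq> 0" and "v \<in> carrier_vec n"
  shows "A *\<^sub>v v = 0\<^sub>v n \<longleftrightarrow> v = 0\<^sub>v n"
  using assms det_0_iff_vec_prod_zero[OF assms(1)] by auto

lemma constant_vec_of_mult_mat_vec:
  fixes A :: "'a::idom mat"
  assumes A: "A \<in> carrier_mat n n" and det: "det A \<noteq> 0"
    and rows: "A *\<^sub>v vec n (\<lambda>_. 1) = s \<cdot>\<^sub>v vec n (\<lambda>_. 1)" and s: "s \<noteq> 0"
    and v: "v \<in> carrier_vec n" and const: "constant_vec (A *\<^sub>v v)"
  shows "constant_vec v"
proof -
  let ?one = "vec n (\<lambda>_. 1 :: 'a)"
  obtain c where Av: "A *\<^sub>v v = c \<cdot>\<^sub>v ?one"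
    using const constant_vec_iff_smult_one[of "A *\<^sub>v v" n] A v by auto
  have "A *\<^sub>v (s \<cdot>\<^sub>v v - c \<cdot>\<^sub>v ?one) = s \<cdot>\<^sub>v (A *\<^sub>v v) - c \<cdot>\<^sub>v (A *\<^sub>v ?one)"
    using A v by (simp add: mult_minus_distrib_mat_vec mult_mat_vec_smult)
  also have "\<dots> = 0\<^sub>v n"
    unfolding Av rows by (intro eq_vecI) auto
  finally have kernel: "s \<cdot>\<^sub>v v - c \<cdot>\<^sub>v ?one = 0\<^sub>v n"
    using mult_mat_vec_eq_0_iff[OF A det] v by simp
  have "s * v $ i = c" if "i < n" for i
  proof -
    have "(s \<cdot>\<^sub>v v - c \<cdot>\<^sub>v ?one) $ i = 0"
      unfolding kernel using that by simp
    then show ?thesis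
      using that v by simp
  qed
  then show ?thesis
    using s v unfolding constant_vec_def by (metis carrier_vecD mult_left_cancel)
qed

lemma singular_kernel_nonconstant:
  fixes A :: "'a::idom mat"
  assumes A: "A \<in> carrier_mat n n" and det: "det A = 0"
    and rows: "A *\<^sub>v vec n (\<lambda>_. 1) = s \<cdot>\<^sub>v vec n (\<lambda>_. 1)" and s: "s \<noteq> 0"
  shows "\<exists>v\<in>carrier_vec n. A *\<^sub>v v = 0\<^sub>v n \<and> \<not> constant_vec v"
proof -
  obtain v where v: "v \<in> carrier_vec n" "v \<noteq> 0\<^sub>v n" "A *\<^sub>v v = 0\<^sub>v n"
    using det det_0_iff_vec_prod_zero[OF A] by blast
  have "\<not> constant_vec v"
  proof
    assume "constant_vec v"
    then obtain c where c: "v = c \<cdot>\<^sub>v vec n (\<lambda>_. 1)"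
      using constant_vec_iff_smult_one[OF v(1)] by blast
    then have Av: "(c * s) \<cdot>\<^sub>v vec n (\<lambda>_. 1) = 0\<^sub>v n"
      using v(3) mult_mat_vec_smult_one[OF A rows] by simp
    have "n \<noteq> 0"
    proof
      assume "n = 0"
      then have "v = 0\<^sub>v n"
        using v(1) by (intro eq_vecI) auto
      with v(2) show False ..
    qed
    then have "((c * s) \<cdot>\<^sub>v vec n (\<lambda>_. 1)) $ 0 = 0"
      unfolding Av by simp
    with \<open>n \<noteq> 0\<close> s have "c = 0"
      by simp
    then have "v = 0\<^sub>v n"
      unfolding c by (intro eq_vecI) auto
    with v(2) show False ..
  qed
  with v show ?thesis by blast
qed

(* An integer copy of enc_mat: kernel vectors of a singular encoding matrix can then be
   taken integral, and shifted they become letter counts of a word. *)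
definition enc_int_mat :: "nat \<Rightarrow> (nat \<Rightarrow> nat \<Rightarrow> nat) \<Rightarrow> int mat" where
  "enc_int_mat b L = mat b b (\<lambda>(i, j). int (enc b L (i + 1) (j + 1)))"

lemma enc_int_mat_carrier: "enc_int_mat b L \<in> carrier_mat b b"
  unfolding enc_int_mat_def by simp

lemma enc_int_mat_mult_vec:
  "enc_int_mat b L *\<^sub>v vec b (\<lambda>i. f (i + 1))
     = vec b (\<lambda>i. \<Sum>q\<in>{1..b}. int (enc b L (i + 1) q) * f q)"
  by (rule eq_vecI)
    (simp_all add: enc_int_mat_def scalar_prod_def sum.atLeast1_atMost_eq atLeast0LessThan)

lemma enc_int_mat_mult_one:
  assumes "latin_square b L"
  shows "enc_int_mat b L *\<^sub>v vec b (\<lambda>_. 1) = int (\<Sum>k\<in>{1..b}. k) \<cdot>\<^sub>v vec b (\<lambda>_. 1)"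
  using enc_int_mat_mult_vec[of b L "\<lambda>_. 1"] sum_enc_row[OF assms _, of _ int]
  by (intro eq_vecI) auto

lemma sum_atLeast1_atMost_nonzero:
  assumes "b \<ge> 1"
  shows "int (\<Sum>k\<in>{1..b}. k) \<noteq> 0"
  using assms by (force simp: sum_nonneg_eq_0_iff)

lemma invertible_mat_iff_det_nonzero:
  fixes A :: "'a::field mat"
  assumes A: "A \<in> carrier_mat n n"
  shows "invertible_mat A \<longleftrightarrow> det A \<noteq> 0"
proof
  assume "invertible_mat A"
  then obtain B where AB: "A * B = 1\<^sub>m n" and BA: "B * A = 1\<^sub>m (dim_row B)"
    using A unfolding invertible_mat_def inverts_mat_def by auto
  have "dim_row B = n"
    using arg_cong[OF BA, of dim_col] A by simp
  moreover have "dim_col B = n"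
    using arg_cong[OF AB, of dim_col] by simp
  ultimately have B: "B \<in> carrier_mat n n" by auto
  have "det A * det B = 1"
    using arg_cong[OF AB, of det] by (simp add: det_mult[OF A B])
  then show "det A \<noteq> 0" by auto
next
  assume "det A \<noteq> 0"
  from det_non_zero_imp_unit[OF A this, of "()"]
  obtain B where "B \<in> carrier_mat n n" "B * A = 1\<^sub>m n" "A * B = 1\<^sub>m n"
    unfolding Units_def ring_mat_def by auto
  then show "invertible_mat A"
    using A unfolding invertible_mat_def inverts_mat_def by auto
qed

lemma invertible_enc_mat_iff: "invertible_mat (enc_mat b L) \<longleftrightarrow> det (enc_int_mat b L) \<noteq> 0"
proof -
  have "enc_mat b L = map_mat of_int (enc_int_mat b L)"
    unfolding enc_mat_def enc_int_mat_def by (rule eq_matI) auto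
  then have "det (enc_mat b L) = of_int (det (enc_int_mat b L))"
    by (simp add: of_int_hom.hom_det)
  moreover have "enc_mat b L \<in> carrier_mat b b"
    by (simp add: enc_mat_def)
  ultimately show ?thesis
    by (simp add: invertible_mat_iff_det_nonzero)
qed

definition moment_vec :: "nat \<Rightarrow> nat list \<Rightarrow> nat \<Rightarrow> int vec" where
  "moment_vec b w j = vec b (\<lambda>i. int (pos_power_sum w (i + 1) j))"

lemma moment_vec_carrier: "moment_vec b w j \<in> carrier_vec b"
  unfolding moment_vec_def by simp

lemma balanced_iff_constant_moment_vec: "balanced b w j \<longleftrightarrow> constant_vec (moment_vec b w j)"
  unfolding balanced_def moment_vec_def
  using constant_vec_shift_iff[of b "\<lambda>q. int (pos_power_sum w q j)"] by simp

lemma balanced_latin_apply_Suc_iff: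
  assumes ls: "latin_square b L" and wo: "word_over b w" and lower: "\<forall>i<j. balanced b w i"
  shows "balanced b (latin_apply b L w) (Suc j)
     \<longleftrightarrow> constant_vec (enc_int_mat b L *\<^sub>v moment_vec b w j)"
proof -
  have "enc_int_mat b L *\<^sub>v moment_vec b w j
      = vec b (\<lambda>i. int (\<Sum>q\<in>{1..b}. enc b L (i + 1) q * pos_power_sum w q j))"
    unfolding moment_vec_def enc_int_mat_mult_vec[of b L "\<lambda>q. int (pos_power_sum w q j)"]
    by simp
  then show ?thesis
    unfolding balanced_def
    using constant_vec_shift_iff[of b "\<lambda>x. int (\<Sum>q\<in>{1..b}. enc b L x q * pos_power_sum w q j)"]
      pos_power_sum_latin_apply_Suc_eq_iff[OF ls wo lower]
    by (simp del: of_nat_sum of_nat_mult)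
qed

lemma regular_latin_apply:
  assumes ls: "latin_square b L" and wo: "word_over b w" and reg: "regular b r w"
  shows "regular b (r + 1) (latin_apply b L w)"
  unfolding regular_iff_balanced
proof (intro allI impI)
  fix k assume k: "int k \<le> r + 1"
  show "balanced b (latin_apply b L w) k"
  proof (cases k)
    case 0
    then show ?thesis using balanced_latin_apply_0[OF ls wo] by simp
  next
    case (Suc j)
    have lower: "\<forall>i<j. balanced b w i" and "balanced b w j"
      using reg k Suc unfolding regular_iff_balanced by auto
    then have "constant_vec (enc_int_mat b L *\<^sub>v moment_vec b w j)"
      using constant_vec_mult_mat_vec[OF enc_int_mat_carrier enc_int_mat_mult_one[OF ls] moment_vec_carrier]
      unfolding balanced_iff_constant_moment_vec by blast
    then show ?thesis
      unfolding Suc balanced_latin_apply_Suc_iff[OF ls wo lower] .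
  qed
qed

lemma regular_of_regular_latin_apply:
  assumes ls: "latin_square b L" and wo: "word_over b w" and b: "b \<ge> 1"
    and inv: "invertible_mat (enc_mat b L)" and reg: "regular b (r + 1) (latin_apply b L w)"
  shows "regular b r w"
proof -
  have det: "det (enc_int_mat b L) \<noteq> 0"
    using inv invertible_enc_mat_iff by blast
  have "balanced b w j" if "int j \<le> r" for j
    using that
  proof (induction j rule: less_induct)
    case (less j)
    then have lower: "\<forall>i<j. balanced b w i" by simp
    have "balanced b (latin_apply b L w) (Suc j)"
      using reg less.prems unfolding regular_iff_balanced by simp
    then have "constant_vec (enc_int_mat b L *\<^sub>v moment_vec b w j)"
      unfolding balanced_latin_apply_Suc_iff[OF ls wo lower] .
    then show ?case
      unfolding balanced_iff_constant_moment_vec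
      by (rule constant_vec_of_mult_mat_vec[OF enc_int_mat_carrier det enc_int_mat_mult_one[OF ls]
            sum_atLeast1_atMost_nonzero[OF b] moment_vec_carrier])
  qed
  then show ?thesis
    unfolding regular_iff_balanced by blast
qed

lemma count_list_replicate: "count_list (replicate n a) x = (if a = x then n else 0)"
  by (induction n) auto

lemma exists_word_with_letter_counts:
  "\<exists>w. word_over b w \<and> (\<forall>x\<in>{1..b}. pos_power_sum w x 0 = N x)"
proof -
  define w where "w = concat (map (\<lambda>q. replicate (N q) q) [1..<b + 1])"
  have "count_list w x = N x" if "x \<in> {1..b}" for x
  proof -
    have "count_list (concat (map (\<lambda>q. replicate (N q) q) [1..<n + 1])) x
        = (if x \<in> {1..n} then N x else 0)" for n
    proof (induction n)
      case (Suc n)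
      have "[1..<Suc n + 1] = [1..<n + 1] @ [n + 1]"
        by simp
      then show ?case
        using Suc by (auto simp: count_list_replicate simp del: upt_Suc)
    qed simp
    from this[of b] show ?thesis
      using that unfolding w_def by (simp del: upt_Suc)
  qed
  moreover have "word_over b w"
    unfolding word_over_def w_def by auto
  ultimately show ?thesis
    unfolding pos_power_sum_0_eq_count_list by blast
qed

lemma exists_word_moment_vec_0:
  assumes v: "v \<in> carrier_vec b"
  shows "\<exists>w c. word_over b w \<and> moment_vec b w 0 = v - c \<cdot>\<^sub>v vec b (\<lambda>_. 1)"
proof -
  define c where "c = Min ((\<lambda>i. v $ i) ` {..<b})"
  obtain w where wo: "word_over b w"
    and counts: "\<forall>x\<in>{1..b}. pos_power_sum w x 0 = nat (v $ (x - 1) - c)"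
    using exists_word_with_letter_counts[of b "\<lambda>x. nat (v $ (x - 1) - c)"] by blast
  have "moment_vec b w 0 = v - c \<cdot>\<^sub>v vec b (\<lambda>_. 1)"
    using v counts unfolding moment_vec_def c_def by (intro eq_vecI) auto
  with wo show ?thesis by blast
qed

lemma irregular_word_with_regular_latin_apply:
  assumes ls: "latin_square b L" and b: "b \<ge> 1" and ninv: "\<not> invertible_mat (enc_mat b L)"
  shows "\<exists>w. w \<noteq> [] \<and> word_over b w \<and> regular b 1 (latin_apply b L w) \<and> \<not> regular b 0 w"
proof -
  let ?A = "enc_int_mat b L" and ?one = "vec b (\<lambda>_. 1 :: int)" and ?s = "int (\<Sum>k\<in>{1..b}. k)"
  have "det ?A = 0"
    using ninv invertible_enc_mat_iff by blast
  then obtain v where v: "v \<in> carrier_vec b" "?A *\<^sub>v v = 0\<^sub>v b" "\<not> constant_vec v"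
    using singular_kernel_nonconstant[OF enc_int_mat_carrier _ enc_int_mat_mult_one[OF ls]
        sum_atLeast1_atMost_nonzero[OF b]] by blast
  then obtain w c where wo: "word_over b w" and moments: "moment_vec b w 0 = v - c \<cdot>\<^sub>v ?one"
    using exists_word_moment_vec_0 by blast
  have "?A *\<^sub>v moment_vec b w 0 = ?A *\<^sub>v v - ?A *\<^sub>v (c \<cdot>\<^sub>v ?one)"
    unfolding moments using v(1) by (simp add: mult_minus_distrib_mat_vec[OF enc_int_mat_carrier])
  also have "\<dots> = (- (c * ?s)) \<cdot>\<^sub>v ?one"
    unfolding v(2) mult_mat_vec_smult_one[OF enc_int_mat_carrier enc_int_mat_mult_one[OF ls]]
    by (intro eq_vecI) auto
  finally have "constant_vec (?A *\<^sub>v moment_vec b w 0)"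
    using constant_vec_iff_smult_one mult_mat_vec_carrier[OF enc_int_mat_carrier moment_vec_carrier]
    by blast
  then have bal1: "balanced b (latin_apply b L w) (Suc 0)"
    using balanced_latin_apply_Suc_iff[OF ls wo, of 0] by simp
  have "regular b 1 (latin_apply b L w)"
    unfolding regular_iff_balanced
  proof (intro allI impI)
    fix k :: nat assume "int k \<le> 1"
    then have "k = 0 \<or> k = Suc 0" by auto
    then show "balanced b (latin_apply b L w) k"
      using balanced_latin_apply_0[OF ls wo] bal1 by blast
  qed
  moreover have "\<not> balanced b w 0"
    using v(1,3) unfolding balanced_iff_constant_moment_vec moments constant_vec_def by auto
  moreover from this have "w \<noteq> []"
    by (auto simp: balanced_def pos_power_sum_def)
  ultimately show ?thesis
    using wo unfolding regular_iff_balanced by auto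
qed

theorem mainTheorem2:
  fixes b m :: nat and L :: "nat \<Rightarrow> nat \<Rightarrow> nat" and w :: "nat list" and r :: int
  assumes "b \<ge> 1"
    and "latin_square b L" and "normalized b L"
    and "m \<ge> 1" and "length w = m" and "word_over b w"
    and "r \<ge> -1"
  shows "(regular b r w \<longrightarrow> regular b (r + 1) (latin_apply b L w))
    \<and> (invertible_mat (enc_mat b L) \<and> regular b (r + 1) (latin_apply b L w) \<longrightarrow> regular b r w)
    \<and> (\<not> invertible_mat (enc_mat b L) \<longrightarrow>
         (\<exists>m' w'. m' > 0 \<and> length w' = m' \<and> word_over b w' \<and>
                  regular b 1 (latin_apply b L w') \<and> \<not> regular b 0 w'))"
proof (intro conjI impI)
  assume "regular b r w"
  then show "regular b (r + 1) (latin_apply b L w)"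
    by (rule regular_latin_apply[OF assms(2,6)])
next
  assume "invertible_mat (enc_mat b L) \<and> regular b (r + 1) (latin_apply b L w)"
  then show "regular b r w"
    using regular_of_regular_latin_apply[OF assms(2,6,1)] by blast
next
  assume "\<not> invertible_mat (enc_mat b L)"
  then obtain w' where "w' \<noteq> []" "word_over b w'"
    "regular b 1 (latin_apply b L w')" "\<not> regular b 0 w'"
    using irregular_word_with_regular_latin_apply[OF assms(2,1)] by blast
  then show "\<exists>m' w'. m' > 0 \<and> length w' = m' \<and> word_over b w' \<and>
      regular b 1 (latin_apply b L w') \<and> \<not> regular b 0 w'"
    by auto
qed

end
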